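(* Let $F=\langle f_1,\ldots,f_k\rangle$ be a normalized solution to an instance $(\mathcal{T}_{initial},\mathcal{T}_{final},k)$ of Flip Distance, and let $C$ be a component of $\mathcal{D}_F$. Let $f_i$ and $f_h$, with $i<h$, be two flips in $C$. If one of the following conditions holds, then there is a directed path from $f_i$ to $f_h$ in $C$: (1) $\phi(f_h)$ crosses $\epsilon(f_i)$; (2) $\phi(f_h)=\epsilon(f_i)$; (3) $\epsilon(f_i)=\epsilon(f_h)$; (4) $\phi(f_i)=\epsilon(f_h)$, or $\phi(f_i)$ and $\epsilon(f_h)$ share a triangle $T$ in $\mathcal{T}_j$ for some $j$ with $i\le j<h$.
   Context: A triangulation of a finite point set $\mathcal{P}$ in the plane is a partition of the convex hull of $\mathcal{P}$ into triangles whose vertex set is $\mathcal{P}$. For an interior edge $e$ of a triangulation $\mathcal{T}$, the quadrilateral associated with $e$ is the union of the two triangles of $\mathcal{T}$ sharing $e$. A flip $f$ with underlying edge $\epsilon(f)=e$ is admissible in $\mathcal{T}$ if $e\in\mathcal{T}$ and its associated quadrilateral is convex; performing it replaces $e$ by the other diagonal $\phi(f)$ of that quadrilateral. Two distinct edges share a triangle in $\mathcal{T}$ if they are edges of the same triangle of $\mathcal{T}$; two edges between points of $\mathcal{P}$ cross if they intersect in their interiors. A sequence $F=\langle f_1,\ldots,f_r\rangle$ is valid with respect to $\mathcal{T}$ if there are triangulations $\mathcal{T}_0=\mathcal{T},\mathcal{T}_1,\ldots,\mathcal{T}_r$ such that $f_i$ is admissible in $\mathcal{T}_{i-1}$ and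 performing it yields $\mathcal{T}_i$; then we write $\mathcal{T}\xrightarrow{F}\mathcal{T}_r$. Flips in a sequence are distinct objects even if they have the same underlying edge. For $1\le i<j\le r$, flip $f_j$ is adjacent to $f_i$ (written $f_i\to f_j$) if (1) either $\phi(f_i)=\epsilon(f_j)$ or $\phi(f_i)$ and $\epsilon(f_j)$ share a triangle in $\mathcal{T}_{j-1}$, and (2) there is no $p$ with $i<p<j$ and $\epsilon(f_p)=\phi(f_i)$. $\mathcal{D}_F$ is the directed acyclic graph whose nodes are the flips of $F$ and whose arcs are the pairs $f_i\to f_j$; a component of it is a weakly connected component. The flip distance between two triangulations is the minimum length of a valid sequence transforming one into the other. An instance $(\mathcal{T}_{initial},\mathcal{T}_{final},k)$ of Flip Distance consists of two triangulations of $\mathcal{P}$ and $k\in\mathbb{N}$; a solution is a valid sequence $F$ of length $k$ with $\mathcal{T}_{initial}\xrightarrow{F}\mathcal{T}_{final}$, where $k$ is the flip distance between them. For a solution $F=\langle f_1,\ldots,f_k\rangle$, $\mathcal{T}_j$ denotes the outcome of applying $\langle f_1,\ldots,f_j\rangle$ to $\mathcal{T}_{initial}$. A changed edge is an edge of $\mathcal{T}_{initial}$ not in $\mathcal{T}_{final}$; a component of $\mathcal{D}_F$ is essential if it contains a flip whose underlying edge is a changed edge. A solution $F$ is normalized if every component of $\mathcal{D}_F$ is essential and the flips of each component of $\mathcal{D}_F$ appear as a consecutive block in $F$. *)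

theory Defs
  imports "HOL-Analysis.Analysis"
begin

type_synonym pt = "real \<times> real"

text \<open>Triangles and edges are represented by their vertex sets.\<close>
definition is_triangle :: "pt set \<Rightarrow> bool" where
  "is_triangle t \<longleftrightarrow> card t = 3 \<and> \<not> collinear t"

definition triangulation :: "pt set \<Rightarrow> pt set set \<Rightarrow> bool" where
  "triangulation P T \<longleftrightarrow> finite T \<and> (\<forall>t\<in>T. is_triangle t \<and> t \<subseteq> P) \<and> \<Union>T = P
     \<and> \<Union>((\<lambda>t. convex hull t) ` T) = convex hull P
     \<and> (\<forall>t\<in>T. \<forall>t'\<in>T. convex hull t \<inter> convex hull t' = convex hull (t \<inter> t'))"

definition tri_edges :: "pt set set \<Rightarrow> pt set set" where
  "tri_edges T = {e. card e = 2 \<and> (\<exists>t\<in>T. e \<subseteq> t)}"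

definition share_tri :: "pt set set \<Rightarrow> pt set \<Rightarrow> pt set \<Rightarrow> bool" where
  "share_tri T e1 e2 \<longleftrightarrow> e1 \<noteq> e2 \<and> card e1 = 2 \<and> card e2 = 2 \<and> (\<exists>t\<in>T. e1 \<subseteq> t \<and> e2 \<subseteq> t)"

definition crosses :: "pt set \<Rightarrow> pt set \<Rightarrow> bool" where
  "crosses e1 e2 \<longleftrightarrow> (\<exists>a b c d. e1 = {a, b} \<and> e2 = {c, d} \<and> a \<noteq> b \<and> c \<noteq> d \<and>
       open_segment a b \<inter> open_segment c d \<noteq> {})"

text \<open>The quadrilateral formed by triangles abc and abd is convex (a genuine convex
  4-gon: the union is convex and each of the four points is a corner).\<close>
definition convex_quad :: "pt \<Rightarrow> pt \<Rightarrow> pt \<Rightarrow> pt \<Rightarrow> bool" where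
  "convex_quad a b c d \<longleftrightarrow> convex (convex hull {a, b, c} \<union> convex hull {a, b, d}) \<and>
     (\<forall>x\<in>{a, b, c, d}. x \<notin> convex hull ({a, b, c, d} - {x}))"

definition flip_step :: "pt set \<Rightarrow> pt set set \<Rightarrow> pt set \<Rightarrow> pt set \<Rightarrow> pt set set \<Rightarrow> bool" where
  "flip_step P T e e' T' \<longleftrightarrow> triangulation P T \<and>
     (\<exists>a b c d. e = {a, b} \<and> e' = {c, d} \<and> a \<noteq> b \<and> c \<noteq> d \<and>
        {a, b, c} \<in> T \<and> {a, b, d} \<in> T \<and> convex_quad a b c d \<and>
        T' = (T - {{a, b, c}, {a, b, d}}) \<union> {{a, c, d}, {b, c, d}})"

text \<open>A flip sequence f_1..f_k is given by F :: nat => (edge * edge), with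
  F j = (epsilon(f_j), phi(f_j)); Ts j is the triangulation T_j.\<close>
definition eps :: "(nat \<Rightarrow> pt set \<times> pt set) \<Rightarrow> nat \<Rightarrow> pt set" where
  "eps F j = fst (F j)"
definition phi :: "(nat \<Rightarrow> pt set \<times> pt set) \<Rightarrow> nat \<Rightarrow> pt set" where
  "phi F j = snd (F j)"

definition valid_seq :: "pt set \<Rightarrow> pt set set \<Rightarrow> nat \<Rightarrow> (nat \<Rightarrow> pt set \<times> pt set)
    \<Rightarrow> (nat \<Rightarrow> pt set set) \<Rightarrow> bool" where
  "valid_seq P T k F Ts \<longleftrightarrow> Ts 0 = T \<and>
     (\<forall>j\<in>{1..k}. flip_step P (Ts (j - 1)) (eps F j) (phi F j) (Ts j))"

definition flip_distance :: "pt set \<Rightarrow> pt set set \<Rightarrow> pt set set \<Rightarrow> nat" where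
  "flip_distance P T1 T2 = (LEAST n. \<exists>F Ts. valid_seq P T1 n F Ts \<and> Ts n = T2)"

definition is_solution :: "pt set \<Rightarrow> pt set set \<Rightarrow> pt set set \<Rightarrow> nat \<Rightarrow> (nat \<Rightarrow> pt set \<times> pt set)
    \<Rightarrow> (nat \<Rightarrow> pt set set) \<Rightarrow> bool" where
  "is_solution P Ti Tf k F Ts \<longleftrightarrow> triangulation P Ti \<and> triangulation P Tf \<and>
     valid_seq P Ti k F Ts \<and> Ts k = Tf \<and> k = flip_distance P Ti Tf"

definition adjacent :: "nat \<Rightarrow> (nat \<Rightarrow> pt set \<times> pt set) \<Rightarrow> (nat \<Rightarrow> pt set set) \<Rightarrow> nat \<Rightarrow> nat \<Rightarrow> bool" where
  "adjacent k F Ts i j \<longleftrightarrow> 1 \<le> i \<and> i < j \<and> j \<le> k \<and>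
     (phi F i = eps F j \<or> share_tri (Ts (j - 1)) (phi F i) (eps F j)) \<and>
     \<not> (\<exists>p. i < p \<and> p < j \<and> eps F p = phi F i)"

definition dag_arcs :: "nat \<Rightarrow> (nat \<Rightarrow> pt set \<times> pt set) \<Rightarrow> (nat \<Rightarrow> pt set set) \<Rightarrow> (nat \<times> nat) set" where
  "dag_arcs k F Ts = {(i, j). adjacent k F Ts i j}"

definition dag_components :: "nat \<Rightarrow> (nat \<Rightarrow> pt set \<times> pt set) \<Rightarrow> (nat \<Rightarrow> pt set set) \<Rightarrow> nat set set" where
  "dag_components k F Ts =
     (\<lambda>i. {j \<in> {1..k}. (i, j) \<in> (dag_arcs k F Ts \<union> (dag_arcs k F Ts)\<inverse>)\<^sup>*}) ` {1..k}"

definition essential :: "pt set set \<Rightarrow> pt set set \<Rightarrow> (nat \<Rightarrow> pt set \<times> pt set) \<Rightarrow> nat set \<Rightarrow> bool" where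
  "essential Ti Tf F C \<longleftrightarrow> (\<exists>j\<in>C. eps F j \<in> tri_edges Ti - tri_edges Tf)"

definition normalized :: "pt set \<Rightarrow> pt set set \<Rightarrow> pt set set \<Rightarrow> nat \<Rightarrow> (nat \<Rightarrow> pt set \<times> pt set)
    \<Rightarrow> (nat \<Rightarrow> pt set set) \<Rightarrow> bool" where
  "normalized P Ti Tf k F Ts \<longleftrightarrow> is_solution P Ti Tf k F Ts \<and>
     (\<forall>C\<in>dag_components k F Ts. essential Ti Tf F C \<and> (\<exists>a b. C = {a..<b}))"

end

theory Submission
  imports Defs
begin

(*
  The proof is by induction on h - i. Its engine is the following observation: if an edge g of
  T_{h-1} equals eps(f_h) or shares a triangle with it, and g was absent at some earlier time, then
  the flip f_r that last created g is adjacent to f_h, because nothing removes g in between. The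
  earlier time is supplied by geometry: two edges of one triangulation never cross, while the two
  diagonals of a flip do. In case (2), eps(f_h) crosses phi(f_h) = eps(f_i), so it is absent before
  f_i, and its last creator satisfies (1) with f_i. In case (1), some side of the quadrilateral of
  f_h crosses eps(f_i) and plays the role of g. In cases (3) and (4) one follows the edge phi(f_i)
  through its removals and re-creations, each re-creation being an instance of (2); in (4) one also
  follows the triangle T until a flip destroys it, and that flip satisfies (3) or (4) with f_h.
*)

section \<open>Triangles and triangulations\<close>

lemma is_triangle_affine_independent:
  assumes "is_triangle t" shows "\<not> affine_dependent t"
proof -
  obtain a b c where "t = {a, b, c}" "a \<noteq> b" "b \<noteq> c" "a \<noteq> c"
    using assms unfolding is_triangle_def card_3_iff by blast
  then show ?thesis
    using assms collinear_3_eq_affine_dependent unfolding is_triangle_def by metis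
qed

lemma is_triangle_distinct:
  assumes "is_triangle {a, b, c}" shows "a \<noteq> b" "a \<noteq> c" "b \<noteq> c"
  using assms unfolding is_triangle_def by (auto simp: card_insert_if split: if_splits)

lemma affine_independent_hull_vertex:
  assumes "\<not> affine_dependent t" "p \<in> t" "S \<subseteq> t" "p \<in> convex hull S"
  shows "p \<in> S"
proof (rule ccontr)
  assume "p \<notin> S"
  with assms(3) have "S \<subseteq> t - {p}" by blast
  then have "p \<in> affine hull (t - {p})"
    using assms(4) convex_hull_subset_affine_hull hull_mono by blast
  with assms(1,2) show False
    unfolding affine_dependent_def by blast
qed

lemma open_segment_end_in_affine_hull:
  assumes "z \<in> open_segment u v"
  shows "u \<in> affine hull {z, v}"
proof -
  obtain s where s: "0 < s" "s < 1" "z = (1 - s) *\<^sub>R u + s *\<^sub>R v"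
    using assms by (auto simp: in_segment)
  have "(1 - s) *\<^sub>R ((1 / (1 - s)) *\<^sub>R z + (- s / (1 - s)) *\<^sub>R v) = (1 - s) *\<^sub>R u"
    using s by (simp add: scaleR_add_right)
  then have "u = (1 / (1 - s)) *\<^sub>R z + (- s / (1 - s)) *\<^sub>R v"
    using s by simp
  moreover have "1 / (1 - s) + - s / (1 - s) = 1"
    using s by (simp add: divide_simps)
  ultimately show ?thesis
    unfolding affine_hull_2 by blast
qed

lemma affine_independent_open_segment_end:
  assumes "\<not> affine_dependent t" "u \<in> t" "v \<in> t" "z \<in> open_segment u v"
    and "S \<subseteq> t" "z \<in> convex hull S"
  shows "u \<in> S"
proof (rule ccontr)
  assume "u \<notin> S"
  with assms(5) have S: "S \<subseteq> t - {u}" by blast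
  have "u \<noteq> v" using assms(4) by auto
  then have "v \<in> affine hull (t - {u})"
    using assms(3) by (simp add: hull_inc)
  moreover have "z \<in> affine hull (t - {u})"
    using assms(6) S convex_hull_subset_affine_hull hull_mono by blast
  ultimately have "{z, v} \<subseteq> affine hull (t - {u})" by blast
  then have "affine hull {z, v} \<subseteq> affine hull (t - {u})"
    by (simp add: hull_minimal)
  with open_segment_end_in_affine_hull[OF assms(4)] assms(1,2) show False
    unfolding affine_dependent_def by blast
qed

lemma open_segment_in_convex_hull: "z \<in> open_segment u v \<Longrightarrow> z \<in> convex hull {u, v}"
  by (metis open_closed_segment segment_convex_hull)

lemma triangulation_is_triangle: "triangulation P T \<Longrightarrow> t \<in> T \<Longrightarrow> is_triangle t"
  unfolding triangulation_def by blast

lemma triangulation_vertices: "triangulation P T \<Longrightarrow> t \<in> T \<Longrightarrow> t \<subseteq> P"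
  unfolding triangulation_def by blast

lemma triangulation_face_to_face: "triangulation P T \<Longrightarrow> t \<in> T \<Longrightarrow> t' \<in> T \<Longrightarrow>
    convex hull t \<inter> convex hull t' = convex hull (t \<inter> t')"
  unfolding triangulation_def by blast

lemma triangulation_point_in_hull_imp_vertex:
  assumes T: "triangulation P T" and "t \<in> T" "p \<in> P" "p \<in> convex hull t"
  shows "p \<in> t"
proof -
  have "\<Union>T = P" using T unfolding triangulation_def by blast
  then obtain t' where t': "t' \<in> T" "p \<in> t'"
    using assms(3) by blast
  then have "p \<in> convex hull t'" by (simp add: hull_inc)
  then have "p \<in> convex hull (t' \<inter> t)"
    using triangulation_face_to_face[OF T t'(1) assms(2)] assms(4) by blast
  moreover have "\<not> affine_dependent t'"
    using T t'(1) is_triangle_affine_independent triangulation_is_triangle by blast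
  ultimately show ?thesis
    using affine_independent_hull_vertex t'(2) by blast
qed

lemma triangulation_open_edge_avoids_points:
  assumes T: "triangulation P T" and "t \<in> T" "u \<in> t" "v \<in> t" "p \<in> P"
  shows "p \<notin> open_segment u v"
proof
  assume p: "p \<in> open_segment u v"
  then have puv: "p \<in> convex hull {u, v}"
    by (rule open_segment_in_convex_hull)
  moreover have "convex hull {u, v} \<subseteq> convex hull t"
    using assms(3,4) by (simp add: hull_mono)
  ultimately have "p \<in> t"
    using triangulation_point_in_hull_imp_vertex[OF T assms(2,5)] by blast
  moreover have "\<not> affine_dependent t"
    using T assms(2) is_triangle_affine_independent triangulation_is_triangle by blast
  ultimately have "p \<in> {u, v}"
    using affine_independent_hull_vertex[OF _ _ _ puv] assms(3,4) by blast
  with p show False by (auto simp: open_segment_def)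
qed

lemma triangulation_crossing_edges_eq:
  assumes T: "triangulation P T" and "e1 \<in> tri_edges T" "e2 \<in> tri_edges T" "crosses e1 e2"
  shows "e1 = e2"
proof -
  obtain a b c d z where e: "e1 = {a, b}" "e2 = {c, d}"
    and z: "z \<in> open_segment a b" "z \<in> open_segment c d"
    using assms(4) unfolding crosses_def by blast
  obtain t1 t2 where t: "t1 \<in> T" "e1 \<subseteq> t1" "t2 \<in> T" "e2 \<subseteq> t2"
    using assms(2,3) unfolding tri_edges_def by blast
  have indep: "\<not> affine_dependent t1" "\<not> affine_dependent t2"
    using t T is_triangle_affine_independent triangulation_is_triangle by blast+
  have hulls: "z \<in> convex hull {a, b}" "z \<in> convex hull {c, d}"
    using z by (simp_all add: open_segment_in_convex_hull)
  then have "z \<in> convex hull t1 \<inter> convex hull t2"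
    using t e hull_mono by blast
  then have z12: "z \<in> convex hull (t1 \<inter> t2)"
    using triangulation_face_to_face[OF T t(1,3)] by blast
  have "c \<in> t1" "d \<in> t1"
    using affine_independent_open_segment_end[OF indep(2) _ _ _ _ z12, of c d]
      affine_independent_open_segment_end[OF indep(2) _ _ _ _ z12, of d c]
      z(2) t(4) e(2) by (auto simp: open_segment_commute)
  then have cd: "{c, d} \<subseteq> t1" by blast
  have "a \<in> {c, d}" "b \<in> {c, d}"
    using affine_independent_open_segment_end[OF indep(1) _ _ _ cd hulls(2), of a b]
      affine_independent_open_segment_end[OF indep(1) _ _ _ cd hulls(2), of b a]
      z(1) t(2) e(1) by (auto simp: open_segment_commute)
  moreover have "a \<noteq> b" "c \<noteq> d" using z by auto
  ultimately show ?thesis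
    using e by blast
qed

section \<open>Orientation and crossing segments\<close>

definition det2 :: "pt \<Rightarrow> pt \<Rightarrow> real" where
  "det2 u v = fst u * snd v - snd u * fst v"

lemma det2_cramer: "det2 u w *\<^sub>R v = det2 v w *\<^sub>R u + det2 u v *\<^sub>R w"
  by (simp add: det2_def prod_eq_iff algebra_simps)

lemma det2_eq_0_imp_parallel:
  assumes "det2 u v = 0" "u \<noteq> 0" shows "\<exists>r. v = r *\<^sub>R u"
proof (cases "fst u = 0")
  case True
  with assms have "snd u \<noteq> 0" "fst v = 0"
    by (auto simp: det2_def prod_eq_iff)
  then have "v = (snd v / snd u) *\<^sub>R u"
    using True by (simp add: prod_eq_iff)
  then show ?thesis by blast
next
  case False
  with assms(1) have "snd v = fst v / fst u * snd u"
    by (simp add: det2_def field_simps)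
  then have "v = (fst v / fst u) *\<^sub>R u"
    using False by (simp add: prod_eq_iff)
  then show ?thesis by blast
qed

lemma det2_closed_segment:
  assumes "p \<in> closed_segment a b" shows "det2 (b - a) (p - a) = 0"
proof -
  obtain u where "p - a = u *\<^sub>R (b - a)"
    using assms by (auto simp: in_segment algebra_simps)
  then show ?thesis by (simp add: det2_def)
qed

lemma is_triangle_det2_nonzero:
  assumes "is_triangle {a, b, c}" shows "det2 (b - a) (c - a) \<noteq> 0"
proof
  assume "det2 (b - a) (c - a) = 0"
  moreover have "b - a \<noteq> 0" using is_triangle_distinct[OF assms] by simp
  ultimately obtain r where "c - a = r *\<^sub>R (b - a)"
    using det2_eq_0_imp_parallel by blast
  then have "c = (1 - r) *\<^sub>R a + r *\<^sub>R b"
    by (simp add: algebra_simps)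
  moreover have "(1 - r) + r = 1" by simp
  ultimately have "c \<in> affine hull {a, b}"
    unfolding affine_hull_2 by blast
  then have "collinear {a, b, c}"
    by (rule affine_hull_3_imp_collinear)
  with assms show False
    unfolding is_triangle_def by blast
qed

lemma same_side_triangles_overlap:
  assumes "det2 (b - a) (c - a) * det2 (b - a) (x - a) > 0"
  shows "\<exists>p \<in> convex hull {a, b, c} \<inter> convex hull {a, b, x}. det2 (b - a) (p - a) \<noteq> 0"
proof -
  define D1 D2 where "D1 = det2 (b - a) (c - a)" and "D2 = det2 (b - a) (x - a)"
  define \<alpha> \<delta> where "\<alpha> = det2 (c - a) (x - a) / D2" and "\<delta> = D1 / D2"
  have "D1 \<noteq> 0" "D2 \<noteq> 0" "\<delta> > 0"
    using assms by (auto simp: D1_def D2_def \<delta>_def zero_less_mult_iff zero_less_divide_iff)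
  have "c - a = (1 / D2) *\<^sub>R (D2 *\<^sub>R (c - a))"
    using \<open>D2 \<noteq> 0\<close> by simp
  also have "\<dots> = \<alpha> *\<^sub>R (b - a) + \<delta> *\<^sub>R (x - a)"
    unfolding D1_def D2_def det2_cramer[of "b - a" "x - a" "c - a"]
    by (simp add: \<alpha>_def \<delta>_def D1_def D2_def scaleR_add_right)
  finally have c: "c - a = \<alpha> *\<^sub>R (b - a) + \<delta> *\<^sub>R (x - a)" .
  \<comment> \<open>a point just off the midpoint of ab, on the common side of c and x\<close>
  define \<gamma> where "\<gamma> = 1 / (4 * (1 + \<bar>\<alpha>\<bar> + \<delta>))"
  define p where "p = a + (1 / 2) *\<^sub>R (b - a) + \<gamma> *\<^sub>R (c - a)"
  have den: "1 + \<bar>\<alpha>\<bar> + \<delta> > 0"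
    using \<open>\<delta> > 0\<close> by simp
  then have "\<gamma> > 0" "\<gamma> * (1 + \<bar>\<alpha>\<bar> + \<delta>) = 1 / 4"
    by (simp_all add: \<gamma>_def)
  then have sum: "\<gamma> + \<gamma> * \<bar>\<alpha>\<bar> + \<gamma> * \<delta> = 1 / 4"
    by (simp add: algebra_simps)
  moreover have "0 \<le> \<gamma> * \<delta>" "\<bar>\<gamma> * \<alpha>\<bar> = \<gamma> * \<bar>\<alpha>\<bar>"
    using \<open>\<delta> > 0\<close> \<open>\<gamma> > 0\<close> by (simp_all add: abs_mult)
  ultimately have \<gamma>: "\<gamma> \<le> 1 / 2" "0 \<le> 1 / 2 + \<gamma> * \<alpha>" "0 \<le> \<gamma> * \<delta>"
    "(1 / 2 + \<gamma> * \<alpha>) + \<gamma> * \<delta> \<le> 1"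
    using \<open>\<gamma> > 0\<close> abs_ge_self[of "\<gamma> * \<alpha>"] abs_ge_minus_self[of "\<gamma> * \<alpha>"] by linarith+
  have "p \<in> convex hull {a, b, c}"
    unfolding convex_hull_3_alt p_def using \<gamma>(1) \<open>\<gamma> > 0\<close> by force
  moreover have "p = a + (1 / 2 + \<gamma> * \<alpha>) *\<^sub>R (b - a) + (\<gamma> * \<delta>) *\<^sub>R (x - a)"
    unfolding p_def c by (simp add: scaleR_add_right scaleR_add_left)
  then have "p \<in> convex hull {a, b, x}"
    unfolding convex_hull_3_alt using \<gamma>(2-4) by blast
  moreover have "det2 (b - a) (p - a) = \<gamma> * D1"
    by (simp add: p_def D1_def det2_def algebra_simps) (simp add: field_simps)
  then have "det2 (b - a) (p - a) \<noteq> 0"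
    using \<open>\<gamma> > 0\<close> \<open>D1 \<noteq> 0\<close> by simp
  ultimately show ?thesis by blast
qed

lemma triangulation_opposite_sides:
  assumes T: "triangulation P T" and t1: "{a, b, c} \<in> T" and t2: "{a, b, x} \<in> T" and "c \<noteq> x"
  shows "det2 (b - a) (c - a) * det2 (b - a) (x - a) < 0"
proof (rule ccontr)
  have tri: "is_triangle {a, b, c}" "is_triangle {a, b, x}"
    using t1 t2 T triangulation_is_triangle by blast+
  assume "\<not> ?thesis"
  moreover have "det2 (b - a) (c - a) * det2 (b - a) (x - a) \<noteq> 0"
    using is_triangle_det2_nonzero[OF tri(1)] is_triangle_det2_nonzero[OF tri(2)] by simp
  ultimately have "det2 (b - a) (c - a) * det2 (b - a) (x - a) > 0"
    by linarith
  then obtain p where p: "p \<in> convex hull {a, b, c} \<inter> convex hull {a, b, x}"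
    and det: "det2 (b - a) (p - a) \<noteq> 0"
    using same_side_triangles_overlap by blast
  have "{a, b, c} \<inter> {a, b, x} = {a, b}"
    using is_triangle_distinct[OF tri(1)] is_triangle_distinct[OF tri(2)] \<open>c \<noteq> x\<close> by auto
  then have "p \<in> closed_segment a b"
    using p triangulation_face_to_face[OF T t1 t2] by (simp add: segment_convex_hull)
  with det show False
    by (simp add: det2_closed_segment)
qed

lemma triangulation_edge_in_at_most_two_triangles:
  assumes T: "triangulation P T" and "{a, b, c} \<in> T" "{a, b, d} \<in> T" "{a, b, x} \<in> T"
    and "c \<noteq> d" "x \<noteq> c" "x \<noteq> d"
  shows False
proof -
  define A B C where "A = det2 (b - a) (c - a)" "B = det2 (b - a) (d - a)" "C = det2 (b - a) (x - a)"
  have "A * B < 0" "A * C < 0" "B * C < 0"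
    using triangulation_opposite_sides[OF T] assms(2-7) unfolding A_B_C_def by (metis mult.commute)+
  moreover have "(A * B) * (A * C) * (B * C) = (A * B * C)\<^sup>2"
    by (simp add: power2_eq_square algebra_simps)
  ultimately show False
    by (metis mult_neg_neg mult_pos_neg not_less zero_le_power2)
qed

lemma closed_segment_of_nonpos_coefficient:
  fixes a b w :: "'a::real_vector"
  assumes "w = (1 - r) *\<^sub>R a + r *\<^sub>R b" "r \<le> 0"
  shows "a \<in> closed_segment w b"
proof -
  define u where "u = - r / (1 - r)"
  have "0 \<le> u" "u \<le> 1" "(1 - r) * (1 - u) = 1" "(1 - r) * u = - r"
    using assms(2) by (simp_all add: u_def divide_simps)
  then have "(1 - r) *\<^sub>R ((1 - u) *\<^sub>R w + u *\<^sub>R b) = (1 - r) *\<^sub>R a"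
    unfolding assms(1) by (simp add: scaleR_add_right algebra_simps)
  then have "a = (1 - u) *\<^sub>R w + u *\<^sub>R b"
    using assms(2) by simp
  with \<open>0 \<le> u\<close> \<open>u \<le> 1\<close> show ?thesis
    by (auto simp: in_segment)
qed

lemma opposite_sides_segment_meets_line:
  assumes "det2 (b - a) (c - a) * det2 (b - a) (d - a) < 0"
  shows "\<exists>w r. w \<in> open_segment c d \<and> w = (1 - r) *\<^sub>R a + r *\<^sub>R b"
proof -
  define Dc Dd where "Dc = det2 (b - a) (c - a)" and "Dd = det2 (b - a) (d - a)"
  have sg: "Dc > 0 \<and> Dd < 0 \<or> Dc < 0 \<and> Dd > 0"
    using assms by (auto simp: Dc_def Dd_def mult_less_0_iff)
  have "a \<noteq> b" "c \<noteq> d"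
    using assms by (auto simp: det2_def mult_less_0_iff)
  define s where "s = Dc / (Dc - Dd)"
  define w where "w = (1 - s) *\<^sub>R c + s *\<^sub>R d"
  have "0 < s" "s < 1"
    using sg by (auto simp: s_def zero_less_divide_iff divide_less_eq)
  then have "w \<in> open_segment c d"
    using \<open>c \<noteq> d\<close> by (auto simp: w_def in_segment)
  have "det2 (b - a) (w - a) = (1 - s) * Dc + s * Dd"
    by (simp add: w_def Dc_def Dd_def det2_def algebra_simps)
  also have "\<dots> = 0"
  proof -
    have "Dc - Dd \<noteq> 0" using sg by auto
    then show ?thesis by (simp add: s_def field_simps)
  qed
  finally have "det2 (b - a) (w - a) = 0" .
  moreover have "b - a \<noteq> 0"
    using \<open>a \<noteq> b\<close> by simp
  ultimately obtain r where "w - a = r *\<^sub>R (b - a)"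
    using det2_eq_0_imp_parallel by blast
  then have "w = (1 - r) *\<^sub>R a + r *\<^sub>R b"
    by (simp add: algebra_simps)
  with \<open>w \<in> open_segment c d\<close> show ?thesis
    by blast
qed

lemma opposite_sides_segments_cross:
  assumes opp: "det2 (b - a) (c - a) * det2 (b - a) (d - a) < 0"
    and a: "a \<notin> convex hull {b, c, d}" and b: "b \<notin> convex hull {a, c, d}"
  shows "open_segment a b \<inter> open_segment c d \<noteq> {}"
proof -
  obtain w r where w_cd: "w \<in> open_segment c d" and wr: "w = (1 - r) *\<^sub>R a + r *\<^sub>R b"
    using opposite_sides_segment_meets_line[OF opp] by blast
  have "w \<in> convex hull {c, d}"
    using w_cd by (rule open_segment_in_convex_hull)
  then have hulls: "w \<in> convex hull {b, c, d}" "w \<in> convex hull {a, c, d}"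
    using hull_mono[of "{c, d}"] by blast+
  \<comment> \<open>otherwise one of a, b would lie between w and the other\<close>
  have "0 < r"
  proof (rule ccontr)
    assume "\<not> 0 < r"
    then have "a \<in> closed_segment w b"
      using closed_segment_of_nonpos_coefficient[OF wr] by simp
    then show False
      using a hulls(1) closed_segment_subset[OF _ _ convex_convex_hull] hull_inc[of b] by blast
  qed
  moreover have "r < 1"
  proof (rule ccontr)
    assume "\<not> r < 1"
    moreover have wr': "w = (1 - (1 - r)) *\<^sub>R b + (1 - r) *\<^sub>R a"
      using wr by (simp add: algebra_simps)
    ultimately have "b \<in> closed_segment w a"
      using closed_segment_of_nonpos_coefficient[OF wr'] by simp
    then show False
      using b hulls(2) closed_segment_subset[OF _ _ convex_convex_hull] hull_inc[of a] by blast
  qed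
  moreover have "a \<noteq> b"
    using opp by (auto simp: det2_def)
  ultimately have "w \<in> open_segment a b"
    using wr by (auto simp: in_segment)
  with w_cd show ?thesis by blast
qed

lemma crossesI:
  assumes "open_segment a b \<inter> open_segment c d \<noteq> {}" shows "crosses {a, b} {c, d}"
proof -
  have "a \<noteq> b" "c \<noteq> d"
    using assms by auto
  with assms show ?thesis
    unfolding crosses_def by blast
qed

lemma flip_diagonals_cross:
  assumes T: "triangulation P T" and t1: "{a, b, c} \<in> T" and t2: "{a, b, d} \<in> T"
    and "c \<noteq> d" and q: "convex_quad a b c d"
  shows "crosses {a, b} {c, d}"
proof (rule crossesI, rule opposite_sides_segments_cross)
  show "det2 (b - a) (c - a) * det2 (b - a) (d - a) < 0"
    using triangulation_opposite_sides[OF T t1 t2 \<open>c \<noteq> d\<close>] .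
  have "a \<noteq> b" "a \<noteq> c" "b \<noteq> c" "a \<noteq> d" "b \<noteq> d"
    using is_triangle_distinct triangulation_is_triangle T t1 t2 by metis+
  then have "{a, b, c, d} - {a} = {b, c, d}" "{a, b, c, d} - {b} = {a, c, d}"
    by auto
  then show "a \<notin> convex hull {b, c, d}" "b \<notin> convex hull {a, c, d}"
    using q unfolding convex_quad_def by (metis insertCI)+
qed

lemma open_segment_from_inner_point:
  fixes x y z w :: "'a::euclidean_space"
  assumes "z \<in> open_segment x y" "w \<in> closed_segment z x" "w \<noteq> x"
  shows "w \<in> open_segment x y"
proof -
  have "open_segment z x \<subseteq> open_segment x y"
    using assms(1) by (simp add: subset_open_segment open_closed_segment)
  with assms show ?thesis
    by (auto simp: closed_segment_eq_open)
qed

lemma segment_leaving_triangle_crosses_side: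
  fixes a b c x y z :: pt
  assumes "{a, b, c} \<inter> open_segment x y = {}"
    and "z \<in> convex hull {a, b, c}" "z \<in> open_segment x y" "x \<notin> convex hull {a, b, c}"
  shows "\<exists>g\<in>{{a, b}, {b, c}, {a, c}}. crosses g {x, y}"
proof -
  let ?K = "convex hull {a, b, c}"
  have "closed_segment z x \<inter> frontier ?K \<noteq> {}"
    by (rule connected_Int_frontier) (use assms(2,4) in auto)
  then obtain w where w: "w \<in> closed_segment z x" "w \<in> frontier ?K"
    by blast
  have "closed ?K"
    by (simp add: compact_imp_closed finite_imp_compact_convex_hull)
  then have "w \<noteq> x"
    using w(2) assms(4) frontier_subset_closed by blast
  then have wxy: "w \<in> open_segment x y"
    using open_segment_from_inner_point[OF assms(3) w(1)] by blast
  then have "w \<notin> {a, b, c}"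
    using assms(1) by blast
  moreover have "w \<in> closed_segment a b \<union> closed_segment b c \<union> closed_segment a c"
    using w(2) frontier_of_triangle[of a b c] by (simp add: closed_segment_commute[of c a])
  ultimately have "w \<in> open_segment a b \<or> w \<in> open_segment b c \<or> w \<in> open_segment a c"
    by (auto simp: open_segment_def)
  with wxy show ?thesis
    using crossesI by blast
qed

lemma triangulation_edge_meeting_triangle_crosses_side:
  fixes a b c x y z :: pt
  assumes T: "triangulation P T" and t: "{a, b, c} \<in> T"
    and T': "triangulation P T'" and e: "{x, y} \<in> tri_edges T'"
    and z: "z \<in> convex hull {a, b, c}" "z \<in> open_segment x y"
  shows "\<exists>g\<in>{{a, b}, {b, c}, {a, c}}. crosses g {x, y}"
proof -
  obtain t' where t': "t' \<in> T'" "{x, y} \<subseteq> t'"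
    using e unfolding tri_edges_def by blast
  have "{a, b, c} \<subseteq> P" "{x, y} \<subseteq> P"
    using triangulation_vertices T t T' t' by blast+
  then have avoid: "{a, b, c} \<inter> open_segment x y = {}" "{a, b, c} \<inter> open_segment y x = {}"
    using triangulation_open_edge_avoids_points[OF T' t'(1)] t'(2)
    by (auto simp: open_segment_commute)
  consider "x \<notin> convex hull {a, b, c}" | "y \<notin> convex hull {a, b, c}"
    | "x \<in> convex hull {a, b, c}" "y \<in> convex hull {a, b, c}"
    by blast
  then show ?thesis
  proof cases
    case 1
    then show ?thesis
      using segment_leaving_triangle_crosses_side[OF avoid(1) z] by blast
  next
    case 2
    then show ?thesis
      using segment_leaving_triangle_crosses_side[OF avoid(2) z(1) _ 2] z(2)
      by (simp add: open_segment_commute insert_commute)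
  next
    case 3
    then have "x \<in> {a, b, c}" "y \<in> {a, b, c}"
      using triangulation_point_in_hull_imp_vertex[OF T t] \<open>{x, y} \<subseteq> P\<close> by blast+
    moreover have "x \<noteq> y"
      using z(2) by auto
    ultimately have "{x, y} \<in> {{a, b}, {b, c}, {a, c}}"
      by (auto simp: insert_commute)
    moreover have "crosses {x, y} {x, y}"
      using z(2) crossesI[of x y x y] by blast
    ultimately show ?thesis by blast
  qed
qed

lemma flip_diagonal_crossing_edge_crosses_side:
  assumes T: "triangulation P T" and t1: "{a, b, c} \<in> T" and t2: "{a, b, d} \<in> T"
    and q: "convex_quad a b c d"
    and T': "triangulation P T'" and e: "e \<in> tri_edges T'" and cr: "crosses {c, d} e"
  shows "\<exists>g\<in>{{a, b}, {a, c}, {b, c}, {a, d}, {b, d}}. crosses g e"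
proof -
  obtain c' d' x y z where cd: "{c, d} = {c', d'}" and xy: "e = {x, y}"
    and z: "z \<in> open_segment c' d'" "z \<in> open_segment x y"
    using cr unfolding crosses_def by blast
  have "z \<in> convex hull {c, d}"
    using open_segment_in_convex_hull[OF z(1)] cd by simp
  moreover have "convex hull {c, d} \<subseteq> convex hull {a, b, c} \<union> convex hull {a, b, d}"
    using q unfolding convex_quad_def by (intro hull_minimal) (auto simp: hull_inc)
  ultimately have "z \<in> convex hull {a, b, c} \<or> z \<in> convex hull {a, b, d}"
    by blast
  then show ?thesis
    using triangulation_edge_meeting_triangle_crosses_side[OF T _ T' e[unfolded xy] _ z(2)] t1 t2 xy
    by blast
qed

section \<open>Flips\<close>

lemma card2_subset_triple:
  assumes "card g = 2" "g \<subseteq> {p, q, r}"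
  shows "g = {p, q} \<or> g = {p, r} \<or> g = {q, r}"
proof -
  obtain x y where "g = {x, y}" "x \<noteq> y"
    using assms(1) by (auto simp: card_2_iff)
  with assms(2) show ?thesis by auto
qed

lemma tri_edgesI: "x \<noteq> y \<Longrightarrow> t \<in> T \<Longrightarrow> {x, y} \<subseteq> t \<Longrightarrow> {x, y} \<in> tri_edges T"
  unfolding tri_edges_def by auto

lemma triangle_sides_in_tri_edges:
  assumes "{a, b, c} \<in> T" "a \<noteq> b" "a \<noteq> c" "b \<noteq> c"
  shows "{a, b} \<in> tri_edges T" "{a, c} \<in> tri_edges T" "{b, c} \<in> tri_edges T"
  using assms tri_edgesI[of _ _ "{a, b, c}"] by blast+

lemma tri_edges_card: "e \<in> tri_edges T \<Longrightarrow> card e = 2"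
  unfolding tri_edges_def by blast

lemma eq_or_share_tri:
  "t \<in> T \<Longrightarrow> e \<subseteq> t \<Longrightarrow> g \<subseteq> t \<Longrightarrow> card e = 2 \<Longrightarrow> card g = 2 \<Longrightarrow> e = g \<or> share_tri T e g"
  unfolding share_tri_def by blast

lemma share_tri_new_diagonal:
  assumes "{x, w, w'} \<in> T" "x \<notin> {w, w'}" "w \<noteq> w'"
  shows "share_tri T {w, w'} {x, w}"
proof -
  have "{w, w'} \<noteq> {x, w}"
    using assms(2) by (metis insertI1)
  moreover have "card {w, w'} = 2" "card {x, w} = 2"
    using assms(2,3) by simp_all
  ultimately show ?thesis
    unfolding share_tri_def using assms(1) by blast
qed

lemma flip_removes_edge:
  assumes T: "triangulation P T" and t1: "{a, b, c} \<in> T" and t2: "{a, b, d} \<in> T" and "c \<noteq> d"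
    and T': "T' = (T - {{a, b, c}, {a, b, d}}) \<union> {{a, c, d}, {b, c, d}}"
  shows "{a, b} \<notin> tri_edges T'"
proof
  assume "{a, b} \<in> tri_edges T'"
  then obtain s where s: "s \<in> T'" "{a, b} \<subseteq> s"
    unfolding tri_edges_def by blast
  have "a \<noteq> b" "a \<noteq> c" "a \<noteq> d" "b \<noteq> c" "b \<noteq> d"
    using is_triangle_distinct triangulation_is_triangle T t1 t2 by metis+
  with s(2) have "s \<noteq> {a, c, d}" "s \<noteq> {b, c, d}"
    by blast+
  with s(1) T' have s_old: "s \<in> T" "s \<noteq> {a, b, c}" "s \<noteq> {a, b, d}"
    by blast+
  have "card s = 3"
    using triangulation_is_triangle[OF T s_old(1)] unfolding is_triangle_def by blast
  then have "card (s - {a, b}) = 1"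
    using s(2) \<open>a \<noteq> b\<close> by (simp add: card_Diff_subset)
  then obtain x where "s - {a, b} = {x}"
    by (rule card_1_singletonE)
  then have "s = {a, b, x}"
    using s(2) by blast
  with s_old show False
    using triangulation_edge_in_at_most_two_triangles[OF T t1 t2, of x] \<open>c \<noteq> d\<close> by blast
qed

lemma flip_tri_edges:
  assumes T: "triangulation P T" and t1: "{a, b, c} \<in> T" and t2: "{a, b, d} \<in> T" and "c \<noteq> d"
    and T': "T' = (T - {{a, b, c}, {a, b, d}}) \<union> {{a, c, d}, {b, c, d}}"
  shows "tri_edges T' = insert {c, d} (tri_edges T - {{a, b}})"
proof -
  have "a \<noteq> b" "a \<noteq> c" "b \<noteq> c" "a \<noteq> d" "b \<noteq> d"
    using is_triangle_distinct triangulation_is_triangle T t1 t2 by metis+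
  have new: "{a, c, d} \<in> T'" "{b, c, d} \<in> T'"
    using T' by auto
  have sides: "{a, c} \<in> tri_edges T" "{b, c} \<in> tri_edges T" "{a, d} \<in> tri_edges T"
    "{b, d} \<in> tri_edges T" "{a, c} \<in> tri_edges T'" "{a, d} \<in> tri_edges T'"
    "{b, c} \<in> tri_edges T'" "{b, d} \<in> tri_edges T'" "{c, d} \<in> tri_edges T'"
    using triangle_sides_in_tri_edges[OF t1] triangle_sides_in_tri_edges[OF t2]
      triangle_sides_in_tri_edges[OF new(1)] triangle_sides_in_tri_edges[OF new(2)]
      \<open>a \<noteq> b\<close> \<open>a \<noteq> c\<close> \<open>a \<noteq> d\<close> \<open>b \<noteq> c\<close> \<open>b \<noteq> d\<close> \<open>c \<noteq> d\<close> by simp_all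
  have "g \<in> tri_edges T \<or> g = {c, d}" if new_edge: "g \<in> tri_edges T'" for g
  proof -
    obtain s where g: "card g = 2" "s \<in> T'" "g \<subseteq> s"
      using new_edge unfolding tri_edges_def by blast
    show ?thesis
    proof (cases "s \<in> T")
      case False
      with g(2) T' have "s = {a, c, d} \<or> s = {b, c, d}"
        by simp
      then have "g = {a, c} \<or> g = {a, d} \<or> g = {c, d} \<or> g = {b, c} \<or> g = {b, d}"
        using card2_subset_triple[OF g(1)] g(3) by (elim disjE) (simp_all, blast+)
      then show ?thesis
        by (elim disjE) (simp_all add: sides)
    qed (use g in \<open>auto simp: tri_edges_def\<close>)
  qed
  moreover have "g \<in> tri_edges T'" if old_edge: "g \<in> tri_edges T" "g \<noteq> {a, b}" for g
  proof -
    obtain s where g: "card g = 2" "s \<in> T" "g \<subseteq> s"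
      using old_edge(1) unfolding tri_edges_def by blast
    show ?thesis
    proof (cases "s = {a, b, c} \<or> s = {a, b, d}")
      case True
      with old_edge(2) have "g = {a, c} \<or> g = {b, c} \<or> g = {a, d} \<or> g = {b, d}"
        using card2_subset_triple[OF g(1)] g(3) by (elim disjE) (simp_all, blast+)
      then show ?thesis
        by (elim disjE) (simp_all add: sides)
    next
      case False
      with g T' show ?thesis
        unfolding tri_edges_def by blast
    qed
  qed
  ultimately show ?thesis
    using flip_removes_edge[OF assms] sides(9) by blast
qed

lemma stays_or_first_exit:
  fixes X :: "nat \<Rightarrow> 'a set"
  assumes "t \<in> X j" "j \<le> h"
  shows "(\<forall>m. j \<le> m \<and> m \<le> h \<longrightarrow> t \<in> X m) \<or>
    (\<exists>q. j < q \<and> q \<le> h \<and> t \<notin> X q \<and> (\<forall>m. j \<le> m \<and> m < q \<longrightarrow> t \<in> X m))"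
  using assms(2)
proof (induction h rule: dec_induct)
  case base
  with assms(1) show ?case by (metis le_antisym)
next
  case (step h)
  then show ?case
    by (metis le_Suc_eq less_Suc_eq_le)
qed

locale flip_sequence =
  fixes P :: "pt set" and k :: nat and F :: "nat \<Rightarrow> pt set \<times> pt set" and Ts :: "nat \<Rightarrow> pt set set"
  assumes steps: "\<And>m. 1 \<le> m \<Longrightarrow> m \<le> k \<Longrightarrow> flip_step P (Ts (m - 1)) (eps F m) (phi F m) (Ts m)"
    and final_triangulation: "triangulation P (Ts k)"
begin

abbreviation edges :: "nat \<Rightarrow> pt set set" where
  "edges m \<equiv> tri_edges (Ts m)"

abbreviation arcs :: "(nat \<times> nat) set" where
  "arcs \<equiv> dag_arcs k F Ts"

lemma triangulation_Ts:
  assumes "m \<le> k" shows "triangulation P (Ts m)"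
proof (cases "m = k")
  case True
  with final_triangulation show ?thesis by simp
next
  case False
  with assms steps[of "Suc m"] have "flip_step P (Ts m) (eps F (Suc m)) (phi F (Suc m)) (Ts (Suc m))"
    by simp
  then show ?thesis
    unfolding flip_step_def by blast
qed

lemma flipE:
  assumes "1 \<le> m" "m \<le> k"
  obtains a b c d where "eps F m = {a, b}" "phi F m = {c, d}" "distinct [a, b, c, d]"
    "{a, b, c} \<in> Ts (m - 1)" "{a, b, d} \<in> Ts (m - 1)" "convex_quad a b c d"
    "Ts m = (Ts (m - 1) - {{a, b, c}, {a, b, d}}) \<union> {{a, c, d}, {b, c, d}}"
proof -
  have "\<exists>a b c d. eps F m = {a, b} \<and> phi F m = {c, d} \<and> a \<noteq> b \<and> c \<noteq> d \<and>
      {a, b, c} \<in> Ts (m - 1) \<and> {a, b, d} \<in> Ts (m - 1) \<and> convex_quad a b c d \<and>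
      Ts m = (Ts (m - 1) - {{a, b, c}, {a, b, d}}) \<union> {{a, c, d}, {b, c, d}}"
    using steps[OF assms] unfolding flip_step_def by (rule conjunct2)
  then obtain a b c d where flip: "eps F m = {a, b} \<and> phi F m = {c, d} \<and> a \<noteq> b \<and> c \<noteq> d \<and>
      {a, b, c} \<in> Ts (m - 1) \<and> {a, b, d} \<in> Ts (m - 1) \<and> convex_quad a b c d \<and>
      Ts m = (Ts (m - 1) - {{a, b, c}, {a, b, d}}) \<union> {{a, c, d}, {b, c, d}}"
    by (elim exE)
  have T: "triangulation P (Ts (m - 1))"
    using assms triangulation_Ts by simp
  have "a \<noteq> c" "b \<noteq> c" "a \<noteq> d" "b \<noteq> d"
    using flip is_triangle_distinct triangulation_is_triangle[OF T] by metis+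
  with flip show thesis
    by (intro that) simp_all
qed

lemma eps_crosses_phi:
  assumes "1 \<le> m" "m \<le> k" shows "crosses (eps F m) (phi F m)"
proof -
  obtain a b c d where flip: "eps F m = {a, b}" "phi F m = {c, d}" "distinct [a, b, c, d]"
    "{a, b, c} \<in> Ts (m - 1)" "{a, b, d} \<in> Ts (m - 1)" "convex_quad a b c d"
    using flipE[OF assms] .
  have "triangulation P (Ts (m - 1))"
    using assms triangulation_Ts by simp
  with flip show ?thesis
    using flip_diagonals_cross by simp
qed

lemma edges_after_flip:
  assumes "1 \<le> m" "m \<le> k"
  shows "edges m = insert (phi F m) (edges (m - 1) - {eps F m})"
    and "eps F m \<in> edges (m - 1)" and "eps F m \<noteq> phi F m"
proof -
  obtain a b c d where flip: "eps F m = {a, b}" "phi F m = {c, d}" "distinct [a, b, c, d]"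
    "{a, b, c} \<in> Ts (m - 1)" "{a, b, d} \<in> Ts (m - 1)" "convex_quad a b c d"
    "Ts m = (Ts (m - 1) - {{a, b, c}, {a, b, d}}) \<union> {{a, c, d}, {b, c, d}}"
    using flipE[OF assms] .
  have T: "triangulation P (Ts (m - 1))"
    using assms triangulation_Ts by simp
  show "edges m = insert (phi F m) (edges (m - 1) - {eps F m})"
    using flip_tri_edges[OF T flip(4,5) _ flip(7)] flip(1-3) by simp
  show "eps F m \<in> edges (m - 1)"
    using triangle_sides_in_tri_edges(1)[OF flip(4)] flip(1,3) by simp
  show "eps F m \<noteq> phi F m"
    using flip(1-3) by (auto simp: doubleton_eq_iff)
qed

lemma phi_in_edges: "1 \<le> m \<Longrightarrow> m \<le> k \<Longrightarrow> phi F m \<in> edges m"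
  by (simp add: edges_after_flip(1))

lemma eps_notin_edges: "1 \<le> m \<Longrightarrow> m \<le> k \<Longrightarrow> eps F m \<notin> edges m"
  by (simp add: edges_after_flip(1,3))

lemma edge_persists_backwards:
  assumes "e \<in> edges b" "b \<le> k" "\<forall>p. r < p \<and> p \<le> b \<longrightarrow> phi F p \<noteq> e" "r \<le> m" "m \<le> b"
  shows "e \<in> edges m"
  using assms(5)
proof (induction m rule: inc_induct)
  case base
  from assms(1) show ?case .
next
  case (step n)
  then have "phi F (Suc n) \<noteq> e" "Suc n \<le> k"
    using assms(2-4) by auto
  with step.IH show ?case
    using edges_after_flip(1)[of "Suc n"] by auto
qed

lemma last_creation:
  assumes "a < b" "b \<le> k" "e \<notin> edges a" "e \<in> edges b"
  obtains r where "a < r" "r \<le> b" "phi F r = e" "\<forall>p. r < p \<and> p \<le> b \<longrightarrow> eps F p \<noteq> e"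
proof -
  define R where "R = {r. a < r \<and> r \<le> b \<and> phi F r = e}"
  have "finite R"
    by (rule finite_subset[of _ "{..b}"]) (auto simp: R_def)
  moreover have "R \<noteq> {}"
    using edge_persists_backwards[OF assms(4,2), of a a] assms(1,3) by (auto simp: R_def)
  ultimately have "Max R \<in> R" and Max_greatest: "\<forall>p \<in> R. p \<le> Max R"
    by simp_all
  then have r: "a < Max R" "Max R \<le> b" "phi F (Max R) = e"
    unfolding R_def by simp_all
  have later: "\<forall>p. Max R < p \<and> p \<le> b \<longrightarrow> phi F p \<noteq> e"
  proof (intro allI impI notI)
    fix p assume p: "Max R < p \<and> p \<le> b" "phi F p = e"
    then have "p \<in> R"
      using r(1) by (simp add: R_def)
    with Max_greatest p(1) show False
      by fastforce
  qed
  have "eps F p \<noteq> e" if "Max R < p" "p \<le> b" for p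
    using edge_persists_backwards[OF assms(4,2) later, of p] eps_notin_edges[of p] that r(1) assms(2)
    by auto
  with r show thesis
    by (intro that) auto
qed

lemma dag_arcI:
  assumes "1 \<le> r" "r < h" "h \<le> k" "phi F r = eps F h \<or> share_tri (Ts (h - 1)) (phi F r) (eps F h)"
    "\<forall>p. r < p \<and> p < h \<longrightarrow> eps F p \<noteq> phi F r"
  shows "(r, h) \<in> arcs"
  using assms unfolding dag_arcs_def adjacent_def by auto

subsection \<open>Paths between flips\<close>

definition path_condition :: "nat \<Rightarrow> nat \<Rightarrow> bool" where
  "path_condition i h \<longleftrightarrow> crosses (phi F h) (eps F i) \<or> phi F h = eps F i \<or> eps F i = eps F h \<or>
     phi F i = eps F h \<or> (\<exists>j. i \<le> j \<and> j < h \<and> share_tri (Ts j) (phi F i) (eps F h))"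

definition paths_below :: "nat \<Rightarrow> bool" where
  "paths_below n \<longleftrightarrow>
     (\<forall>i h. 1 \<le> i \<longrightarrow> i < h \<longrightarrow> h \<le> k \<longrightarrow> h - i < n \<longrightarrow> path_condition i h \<longrightarrow> (i, h) \<in> arcs\<^sup>+)"

lemma paths_belowD:
  "paths_below n \<Longrightarrow> 1 \<le> i \<Longrightarrow> i < h \<Longrightarrow> h \<le> k \<Longrightarrow> h - i < n \<Longrightarrow> path_condition i h \<Longrightarrow>
    (i, h) \<in> arcs\<^sup>+"
  unfolding paths_below_def by blast

lemma arc_from_last_creation:
  assumes "a < h" "h \<le> k" "g \<notin> edges a" "g \<in> edges (h - 1)"
    and "g = eps F h \<or> share_tri (Ts (h - 1)) g (eps F h)"
  shows "\<exists>r. a < r \<and> r < h \<and> phi F r = g \<and> (r, h) \<in> arcs"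
proof -
  have "a < h - 1"
    using assms(1,3,4) by (cases "a = h - 1") auto
  moreover have "h - 1 \<le> k"
    using assms(2) by simp
  ultimately obtain r where r: "a < r" "r \<le> h - 1" "phi F r = g" "\<forall>p. r < p \<and> p \<le> h - 1 \<longrightarrow> eps F p \<noteq> g"
    using last_creation assms(3,4) by blast
  have "(r, h) \<in> arcs"
    by (rule dag_arcI) (use r assms in auto)
  with r show ?thesis
    by auto
qed

lemma path_if_recreates:
  assumes IH: "paths_below (h - i)" and ih: "1 \<le> i" "i < h" "h \<le> k"
    and eq: "phi F h = eps F i"
  shows "(i, h) \<in> arcs\<^sup>+"
proof -
  have "eps F h \<notin> edges (i - 1)"
  proof
    assume "eps F h \<in> edges (i - 1)"
    moreover have "phi F h \<in> edges (i - 1)"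
      using edges_after_flip(2)[of i] eq ih by simp
    moreover have "triangulation P (Ts (i - 1))" "crosses (eps F h) (phi F h)"
      using triangulation_Ts eps_crosses_phi ih by simp_all
    ultimately have "eps F h = phi F h"
      using triangulation_crossing_edges_eq by blast
    with edges_after_flip(3)[of h] ih show False
      by simp
  qed
  moreover have "i - 1 < h" "eps F h \<in> edges (h - 1)"
    using edges_after_flip(2) ih by simp_all
  ultimately obtain r where r: "i - 1 < r" "r < h" "phi F r = eps F h" "(r, h) \<in> arcs"
    using arc_from_last_creation[of "i - 1" h "eps F h"] ih(3) by blast
  have "(i, r) \<in> arcs\<^sup>*"
  proof (cases "r = i")
    case False
    have "path_condition i r"
      using r(3) eq eps_crosses_phi[of h] ih by (simp add: path_condition_def)
    moreover have "i < r" "r - i < h - i" "r \<le> k"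
      using False r ih by auto
    ultimately show ?thesis
      using paths_belowD[OF IH ih(1)] by (simp add: trancl_into_rtrancl)
  qed simp
  then show ?thesis
    using r(4) by (rule rtrancl_into_trancl1)
qed

lemma path_if_same_edge:
  assumes IH: "paths_below (h - i)" and ih: "1 \<le> i" "i < h" "h \<le> k"
    and eq: "eps F i = eps F h"
  shows "(i, h) \<in> arcs\<^sup>+"
proof -
  have "eps F h \<notin> edges i" "eps F h \<in> edges (h - 1)"
    using eps_notin_edges[of i] edges_after_flip(2)[of h] eq ih by auto
  then obtain r where r: "i < r" "r < h" "phi F r = eps F h" "(r, h) \<in> arcs"
    using arc_from_last_creation[of i h "eps F h"] ih(2,3) by blast
  have "(i, r) \<in> arcs\<^sup>+"
    using paths_belowD[OF IH, of i r] r eq ih by (simp add: path_condition_def)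
  then show ?thesis
    using r(4) by (rule trancl_into_trancl)
qed

lemma flip_side_crossing_earlier_edge:
  assumes ih: "1 \<le> i" "i < h" "h \<le> k"
    and cr: "crosses (phi F h) (eps F i)" and ne: "phi F h \<noteq> eps F i" "eps F i \<noteq> eps F h"
  shows "\<exists>g. crosses g (eps F i) \<and> g \<in> edges (h - 1) \<and> g \<notin> edges (i - 1) \<and>
    (g = eps F h \<or> share_tri (Ts (h - 1)) g (eps F h))"
proof -
  have "1 \<le> h"
    using ih by simp
  then obtain a b c d where flip: "eps F h = {a, b}" "phi F h = {c, d}" "distinct [a, b, c, d]"
    "{a, b, c} \<in> Ts (h - 1)" "{a, b, d} \<in> Ts (h - 1)" "convex_quad a b c d"
    using flipE ih(3) by metis
  have T: "triangulation P (Ts (h - 1))" "triangulation P (Ts (i - 1))" "triangulation P (Ts h)"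
    using ih triangulation_Ts by auto
  have eps_i: "eps F i \<in> edges (i - 1)"
    using edges_after_flip(2) ih by simp
  obtain g where g: "g \<in> {{a, b}, {a, c}, {b, c}, {a, d}, {b, d}}" "crosses g (eps F i)"
    using flip_diagonal_crossing_edge_crosses_side[OF T(1) flip(4-6) T(2) eps_i] cr flip(2) by auto
  obtain t where t: "t \<in> Ts (h - 1)" "g \<subseteq> t" "eps F h \<subseteq> t"
    using g(1) flip(1,4,5) by blast
  have "card g = 2"
    using g(1) flip(3) by auto
  then have g_old: "g \<in> edges (h - 1)" "g = eps F h \<or> share_tri (Ts (h - 1)) g (eps F h)"
    using t eq_or_share_tri[OF t(1,2,3)] tri_edges_card[of "eps F h"] edges_after_flip(2)[of h] ih
    unfolding tri_edges_def by auto
  \<comment> \<open>otherwise g and phi(f_h) would be crossing edges of T_h\<close>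
  have "g \<noteq> eps F i"
  proof
    assume gi: "g = eps F i"
    with ne have "g \<in> edges h"
      using g_old(1) edges_after_flip(1)[of h] ih by auto
    then have "phi F h = g"
      using triangulation_crossing_edges_eq[OF T(3) phi_in_edges] cr gi ih by simp
    with ne gi show False
      by simp
  qed
  then have "g \<notin> edges (i - 1)"
    using triangulation_crossing_edges_eq[OF T(2) _ eps_i g(2)] by blast
  with g(2) g_old show ?thesis
    by blast
qed

lemma path_if_crossing:
  assumes IH: "paths_below (h - i)" and ih: "1 \<le> i" "i < h" "h \<le> k"
    and cr: "crosses (phi F h) (eps F i)"
  shows "(i, h) \<in> arcs\<^sup>+"
proof (cases "phi F h = eps F i \<or> eps F i = eps F h")
  case True
  then show ?thesis
    using path_if_recreates[OF IH ih] path_if_same_edge[OF IH ih] by blast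
next
  case False
  then obtain g where g: "crosses g (eps F i)" "g \<in> edges (h - 1)" "g \<notin> edges (i - 1)"
    "g = eps F h \<or> share_tri (Ts (h - 1)) g (eps F h)"
    using flip_side_crossing_earlier_edge[OF ih cr] by blast
  moreover have "i - 1 < h"
    using ih by simp
  ultimately obtain r where r: "i - 1 < r" "r < h" "phi F r = g" "(r, h) \<in> arcs"
    using arc_from_last_creation[of "i - 1" h g] ih(3) by blast
  have "(i, r) \<in> arcs\<^sup>*"
  proof (cases "r = i")
    case False
    have "path_condition i r"
      using r(3) g(1) by (simp add: path_condition_def)
    moreover have "i < r" "r - i < h - i" "r \<le> k"
      using False r ih by auto
    ultimately show ?thesis
      using paths_belowD[OF IH ih(1)] by (simp add: trancl_into_rtrancl)
  qed simp
  then show ?thesis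
    using r(4) by (rule rtrancl_into_trancl1)
qed

lemma path_to_last_creator:
  assumes IH: "paths_below (h - i)" and "1 \<le> i" "i \<le> j" "j < h" "h \<le> k"
    and e: "phi F i = e" "e \<in> edges j"
  shows "\<exists>r. i \<le> r \<and> r \<le> j \<and> phi F r = e \<and> (i, r) \<in> arcs\<^sup>* \<and>
    (\<forall>p. r < p \<and> p \<le> j \<longrightarrow> eps F p \<noteq> e)"
proof (cases "\<exists>p. i < p \<and> p \<le> j \<and> eps F p = e")
  case False
  with assms show ?thesis
    by auto
next
  case True
  define p0 where "p0 = (LEAST p. i < p \<and> p \<le> j \<and> eps F p = e)"
  have p0: "i < p0" "p0 \<le> j" "eps F p0 = e"
    using LeastI_ex[OF True] unfolding p0_def by auto
  have "(i, p0) \<in> arcs"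
  proof (rule dag_arcI)
    show "\<forall>p. i < p \<and> p < p0 \<longrightarrow> eps F p \<noteq> phi F i"
    proof (intro allI impI)
      fix p assume p: "i < p \<and> p < p0"
      then have "\<not> (i < p \<and> p \<le> j \<and> eps F p = e)"
        unfolding p0_def by (rule not_less_Least[OF conjunct2])
      with p p0(2) e(1) show "eps F p \<noteq> phi F i"
        by auto
    qed
  qed (use assms p0 in auto)
  have "e \<notin> edges p0"
    using eps_notin_edges[of p0] p0 assms by simp
  with e(2) have "p0 < j"
    using p0(2) le_neq_implies_less by blast
  then obtain r where r: "p0 < r" "r \<le> j" "phi F r = e" "\<forall>p. r < p \<and> p \<le> j \<longrightarrow> eps F p \<noteq> e"
    using last_creation[OF _ _ \<open>e \<notin> edges p0\<close> e(2)] assms(4,5) by auto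
  have "(p0, r) \<in> arcs\<^sup>+"
    using paths_belowD[OF IH, of p0 r] r p0 assms by (simp add: path_condition_def)
  with \<open>(i, p0) \<in> arcs\<close> have "(i, r) \<in> arcs\<^sup>*"
    by (simp add: trancl_into_rtrancl trancl_into_trancl2)
  moreover have "i \<le> r"
    using r(1) p0(1) by simp
  ultimately show ?thesis
    using r(2-4) by blast
qed

lemma path_if_removes_created:
  assumes IH: "paths_below (h - i)" and ih: "1 \<le> i" "i < h" "h \<le> k"
    and eq: "phi F i = eps F h"
  shows "(i, h) \<in> arcs\<^sup>+"
proof -
  obtain r where r: "i \<le> r" "r \<le> h - 1" "phi F r = eps F h" "(i, r) \<in> arcs\<^sup>*"
    "\<forall>p. r < p \<and> p \<le> h - 1 \<longrightarrow> eps F p \<noteq> eps F h"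
  proof -
    have "i \<le> h - 1" "h - 1 < h" "eps F h \<in> edges (h - 1)"
      using edges_after_flip(2) ih by simp_all
    then show ?thesis
      using path_to_last_creator[OF IH ih(1) _ _ ih(3) eq] that by blast
  qed
  have "(r, h) \<in> arcs"
    by (rule dag_arcI) (use r ih in auto)
  with r(4) show ?thesis
    by (rule rtrancl_into_trancl1)
qed

lemma destroyed_triangleE:
  assumes "1 \<le> q" "q \<le> k" "t \<in> Ts (q - 1)" "t \<notin> Ts q"
  obtains a b w w' where "eps F q = {a, b}" "t = {a, b, w}" "phi F q = {w, w'}"
    "{a, w, w'} \<in> Ts q" "{b, w, w'} \<in> Ts q" "a \<notin> {w, w'}" "b \<notin> {w, w'}" "w \<noteq> w'"
proof -
  obtain a b c d where flip: "eps F q = {a, b}" "phi F q = {c, d}" "distinct [a, b, c, d]"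
    "Ts q = (Ts (q - 1) - {{a, b, c}, {a, b, d}}) \<union> {{a, c, d}, {b, c, d}}"
    using flipE[OF assms(1,2)] by metis
  have "t = {a, b, c} \<or> t = {a, b, d}"
    using assms(3,4) flip(4) by blast
  then show thesis
  proof (elim disjE)
    assume "t = {a, b, c}"
    with flip show thesis
      by (intro that[of a b c d]) simp_all
  next
    assume "t = {a, b, d}"
    moreover have "{d, c} = {c, d}" "{a, d, c} = {a, c, d}" "{b, d, c} = {b, c, d}" "d \<noteq> c"
      using flip(3) by auto
    ultimately show thesis
      using flip by (intro that[of a b d c]) simp_all
  qed
qed

lemma destroyed_triangle:
  assumes "1 \<le> q" "q \<le> k" "t \<in> Ts (q - 1)" "t \<notin> Ts q"
  shows "eps F q \<subseteq> t"
    and "\<And>g. g \<subseteq> t \<Longrightarrow> card g = 2 \<Longrightarrow> g = eps F q \<or> share_tri (Ts q) (phi F q) g"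
proof -
  obtain a b w w' where w: "eps F q = {a, b}" "t = {a, b, w}" "phi F q = {w, w'}"
    "{a, w, w'} \<in> Ts q" "{b, w, w'} \<in> Ts q" "a \<notin> {w, w'}" "b \<notin> {w, w'}" "w \<noteq> w'"
    by (rule destroyed_triangleE[OF assms])
  show "eps F q \<subseteq> t"
    using w(1,2) by blast
  fix g assume "g \<subseteq> t" "card g = 2"
  with w(2) have "g = {a, b} \<or> g = {a, w} \<or> g = {b, w}"
    using card2_subset_triple by simp
  then show "g = eps F q \<or> share_tri (Ts q) (phi F q) g"
    using share_tri_new_diagonal[OF w(4) w(6,8)] share_tri_new_diagonal[OF w(5) w(7,8)] w(1,3)
    by auto
qed

lemma arc_while_triangle_persists:
  assumes "1 \<le> r" "r \<le> j" "j < q" "q \<le> k"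
    and t: "phi F r \<subseteq> t" "eps F q \<subseteq> t" "\<forall>m. j \<le> m \<and> m < q \<longrightarrow> t \<in> Ts m"
    and unflipped: "\<forall>p. r < p \<and> p \<le> j \<longrightarrow> eps F p \<noteq> phi F r"
  shows "(r, q) \<in> arcs"
proof (rule dag_arcI)
  have cards: "card (phi F r) = 2" "card (eps F q) = 2"
    using tri_edges_card phi_in_edges[of r] edges_after_flip(2)[of q] assms(1-4) by auto
  have "t \<in> Ts (q - 1)"
    using t(3) assms(3) by simp
  then show "phi F r = eps F q \<or> share_tri (Ts (q - 1)) (phi F r) (eps F q)"
    using eq_or_share_tri t(1,2) cards by blast
  show "\<forall>p. r < p \<and> p < q \<longrightarrow> eps F p \<noteq> phi F r"
  proof (intro allI impI)
    fix p assume p: "r < p \<and> p < q"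
    show "eps F p \<noteq> phi F r"
    proof (cases "p \<le> j")
      case False
      then have "phi F r \<in> edges p"
        using t(1,3) p cards(1) unfolding tri_edges_def by auto
      then show ?thesis
        using eps_notin_edges[of p] p assms(1,4) by auto
    qed (use unflipped p in auto)
  qed
qed (use assms in auto)

lemma path_if_shared_triangle:
  assumes IH: "paths_below (h - i)" and ih: "1 \<le> i" "i \<le> j" "j < h" "h \<le> k"
    and sh: "share_tri (Ts j) (phi F i) (eps F h)"
  shows "(i, h) \<in> arcs\<^sup>+"
proof -
  obtain t where t: "t \<in> Ts j" "phi F i \<subseteq> t" "eps F h \<subseteq> t" and "card (phi F i) = 2"
    using sh unfolding share_tri_def by blast
  then have "phi F i \<in> edges j"
    unfolding tri_edges_def by blast
  then obtain r where r: "i \<le> r" "r \<le> j" "phi F r = phi F i" "(i, r) \<in> arcs\<^sup>*"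
    "\<forall>p. r < p \<and> p \<le> j \<longrightarrow> eps F p \<noteq> phi F r"
    using path_to_last_creator[OF IH ih refl] by blast
  consider (kept) "\<forall>m. j \<le> m \<and> m < h \<longrightarrow> t \<in> Ts m"
    | (destroyed) q where "j < q" "q < h" "t \<notin> Ts q" "\<forall>m. j \<le> m \<and> m < q \<longrightarrow> t \<in> Ts m"
    using stays_or_first_exit[of t Ts j "h - 1"] t(1) ih(3) by fastforce
  then show ?thesis
  proof cases
    case kept
    then have "(r, h) \<in> arcs"
      using arc_while_triangle_persists[of r j h t] r t ih by auto
    with r(4) show ?thesis
      by (simp add: rtrancl_into_trancl1)
  next
    case (destroyed q)
    have "1 \<le> q" "q \<le> k" "t \<in> Ts (q - 1)"
      using destroyed ih by auto
    note destroyed_q = destroyed_triangle[OF this destroyed(3)]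
    have "(r, q) \<in> arcs"
      using arc_while_triangle_persists[of r j q t] destroyed_q(1) destroyed r t ih by auto
    moreover have "path_condition q h"
      using destroyed_q(2)[OF t(3) tri_edges_card] edges_after_flip(2)[of h] destroyed(2) ih
      unfolding path_condition_def by auto
    then have "(q, h) \<in> arcs\<^sup>+"
      using paths_belowD[OF IH] destroyed(1,2) ih by auto
    ultimately show ?thesis
      using r(4) by (meson rtrancl_into_trancl1 trancl_trans r_into_trancl)
  qed
qed

lemma path_if_path_condition_below:
  assumes IH: "paths_below (h - i)" and ih: "1 \<le> i" "i < h" "h \<le> k"
    and "path_condition i h"
  shows "(i, h) \<in> arcs\<^sup>+"
  using assms(5) unfolding path_condition_def
  using path_if_crossing[OF IH ih] path_if_recreates[OF IH ih] path_if_same_edge[OF IH ih]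
    path_if_removes_created[OF IH ih] path_if_shared_triangle[OF IH ih(1) _ _ ih(3)]
  by blast

lemma paths_below_all: "paths_below n"
proof (induction n)
  case 0
  show ?case by (simp add: paths_below_def)
next
  case (Suc n)
  show ?case
    unfolding paths_below_def
  proof (intro allI impI)
    fix i h assume ih: "1 \<le> i" "i < h" "h \<le> k" "h - i < Suc n" "path_condition i h"
    show "(i, h) \<in> arcs\<^sup>+"
    proof (cases "h - i < n")
      case True
      with Suc.IH ih show ?thesis
        using paths_belowD by blast
    next
      case False
      with ih(4) Suc.IH have "paths_below (h - i)"
        by (simp add: less_Suc_eq)
      with ih show ?thesis
        using path_if_path_condition_below by blast
    qed
  qed
qed

theorem path_if_path_condition:
  "1 \<le> i \<Longrightarrow> i < h \<Longrightarrow> h \<le> k \<Longrightarrow> path_condition i h \<Longrightarrow> (i, h) \<in> arcs\<^sup>+"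
  using paths_belowD[OF paths_below_all] by blast

end

lemma trancl_restrict_to_component:
  assumes "(i, h) \<in> A\<^sup>+" "i \<in> C" "C = {j \<in> V. (i0, j) \<in> (A \<union> A\<inverse>)\<^sup>*}" "A \<subseteq> V \<times> V"
  shows "(i, h) \<in> (A \<inter> C \<times> C)\<^sup>+"
proof -
  have closed: "y \<in> C" if "(x, y) \<in> A" "x \<in> C" for x y
  proof -
    have "(i0, x) \<in> (A \<union> A\<inverse>)\<^sup>*"
      using that(2) assms(3) by blast
    then have "(i0, y) \<in> (A \<union> A\<inverse>)\<^sup>*"
      using that(1) by (simp add: rtrancl_into_rtrancl)
    moreover have "y \<in> V"
      using that(1) assms(4) by blast
    ultimately show ?thesis
      using assms(3) by blast
  qed
  from assms(1) have "(i, h) \<in> (A \<inter> C \<times> C)\<^sup>+ \<and> h \<in> C"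
  proof (induction rule: trancl_induct)
    case (base y)
    have "y \<in> C"
      by (rule closed[OF base assms(2)])
    with base assms(2) show ?case
      by (simp add: r_into_trancl')
  next
    case (step y z)
    then have yz: "(i, y) \<in> (A \<inter> C \<times> C)\<^sup>+" "(y, z) \<in> A" "y \<in> C"
      by simp_all
    have "z \<in> C"
      by (rule closed[OF yz(2,3)])
    with yz show ?case
      using trancl_into_trancl[OF yz(1), of z] by simp
  qed
  then show ?thesis ..
qed

theorem lemma7:
  fixes P :: "pt set" and Ti Tf :: "pt set set" and k :: nat
    and F :: "nat \<Rightarrow> pt set \<times> pt set" and Ts :: "nat \<Rightarrow> pt set set"
    and C :: "nat set" and i h :: nat
  assumes "finite P"
    and "normalized P Ti Tf k F Ts"
    and "C \<in> dag_components k F Ts"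
    and "i \<in> C" and "h \<in> C" and "i < h"
    and "crosses (phi F h) (eps F i) \<or> phi F h = eps F i \<or> eps F i = eps F h \<or>
         phi F i = eps F h \<or> (\<exists>j. i \<le> j \<and> j < h \<and> share_tri (Ts j) (phi F i) (eps F h))"
  shows "(i, h) \<in> (dag_arcs k F Ts \<inter> C \<times> C)\<^sup>+"
proof -
  have "is_solution P Ti Tf k F Ts"
    using assms(2) unfolding normalized_def by (rule conjunct1)
  then have "valid_seq P Ti k F Ts" "Ts k = Tf" "triangulation P Tf"
    unfolding is_solution_def by blast+
  then interpret flip_sequence P k F Ts
    unfolding valid_seq_def by unfold_locales simp_all
  obtain i0 where C: "C = {j \<in> {1..k}. (i0, j) \<in> (arcs \<union> arcs\<inverse>)\<^sup>*}"
    using assms(3) unfolding dag_components_def by blast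
  have "1 \<le> i" "h \<le> k"
    using assms(4,5) C by auto
  moreover have "path_condition i h"
    using assms(7) unfolding path_condition_def .
  ultimately have "(i, h) \<in> arcs\<^sup>+"
    using path_if_path_condition assms(6) by simp
  moreover have "arcs \<subseteq> {1..k} \<times> {1..k}"
    unfolding dag_arcs_def adjacent_def by auto
  ultimately show ?thesis
    by (rule trancl_restrict_to_component[OF _ assms(4) C])
qed

end
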